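(* Let $F:\mathbb{R}^N\to\mathbb{R}\cup\{+\infty\}$ be convex, proper and lower semicontinuous, let $A\in C^1(\operatorname{dom}F;\mathbb{R}^M)$, and let $J(x):=\frac12\|A(x)\|^2+F(x)$. Let $z^0\in\operatorname{dom}F$ be such that Assumption 2.1 holds with constants $\mathfrak d, C>0$. Let $\beta>0$ and $\varepsilon\in(0,\beta)$, and let the relaxation parameter $w$ satisfy $$0<w\le\min\Big\{1,\ \frac{\mathfrak d}{\sqrt{2\beta^{-1}(J(z^0)-\inf F)}},\ \frac{\beta-\varepsilon}{2CA_{\max}}\Big\}$$ (the middle term being read as $+\infty$ if $J(z^0)=\inf F$). Generate $\{z^k\}_{k\ge0}$ by the relaxed inexact proximal Gauss–Newton iteration $z^{k+1}:=(1-w)z^k+w\tilde x^k$, where for each $k$ the point $\tilde x^k$ is an approximate minimiser of $\tilde J_k$ satisfying: 1. there exist $e^k\in\partial\tilde J_k(\tilde x^k)$ with $e^k\to0$ as $k\to\infty$; and 2. either $\tilde J_k(z^k)\ge\tilde J_k(\tilde x^k)$ and $\tilde x^k\ne z^k$, or $\tilde x^k=z^k$ and $0\in\partial\tilde J_k(z^k)$. Then: (i) $\{J(z^k)\}$ is monotonically decreasing and $J(z^k)\searrow L$ for some $L\in\mathbb{R}$; (ii) every accumulation point $\hat x$ of $\{z^k\}$ is Clarke-critical, i.e. $0\in\partial_C J(\hat x)$, and satisfies $J(\hat x)=L$; (iii) with $V_L:=\{\hat x\in\operatorname{dom}F\mid 0\in\partial_CJ(\hat x),\ J(\hat x)=L\}$,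 the iterates approach a single disjoint component of $V_L$: whenever $V_L=U_1\cup U_2$ with $U_1,U_2$ disjoint closed sets, all accumulation points of $\{z^k\}$ lie in the same $U_j$, and $\operatorname{dist}(z^k,U_j)\to0$ for that $j$.
   Context: Notation: $\operatorname{dom}F:=\{x\mid F(x)<\infty\}$; $B(y;r)$ is the open ball, $\operatorname{cl}B(y;r)$ its closure; $\operatorname{lev}_cJ:=\{x\mid J(x)\le c\}$. For $y\in\operatorname{dom}F$, $\nabla A(y)\in\mathbb{R}^{N\times M}$ denotes the transpose of the Jacobian of $A$ at $y$ (so $\nabla A(y)^*$ is the Jacobian), and $\tilde A_y(x):=A(y)+\nabla A(y)^*(x-y)$ is the linearisation of $A$ at $y$. Assumption 2.1 (for the given $z^0$): $\operatorname{lev}_{J(z^0)}J$ is bounded, $\inf F>-\infty$, $A_{\max}:=\sup_{z\in\operatorname{dom}F}\|A(z)\|<\infty$, and there are $\mathfrak d,C>0$ with $\|A(x)-\tilde A_y(x)\|\le C\|x-y\|^2$ for all $y\in\operatorname{lev}_{J(z^0)}J$ and $x\in\operatorname{cl}B(y;\mathfrak d)$. Subproblems: $J_k(x):=\frac12\|\tilde A_{z^k}(x)\|^2+F(x)$ and $\tilde J_k(x):=J_k(x)+\frac\beta2\|x-z^k\|^2$ (both convex); $\partial$ denotes the convex subdifferential. The Clarke subdifferential of $J$ at $x\in\operatorname{dom}F$ is $\partial_CJ(x)=\nabla A(x)A(x)+\partial F(x)$ (where $\nabla A(x)A(x)=\nabla(\frac12\|A\|^2)(x)$), and $x$ is called Clarke-critical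 if $0\in\partial_CJ(x)$. *)

theory Defs
  imports "HOL-Analysis.Analysis"
begin

definition edom :: "('a \<Rightarrow> ereal) \<Rightarrow> 'a set" where
  "edom F = {x. F x < \<infinity>}"

definition proper_fun :: "('a \<Rightarrow> ereal) \<Rightarrow> bool" where
  "proper_fun F \<longleftrightarrow> (\<forall>x. F x \<noteq> -\<infinity>) \<and> (\<exists>x. F x < \<infinity>)"

definition econvex :: "('a::real_vector \<Rightarrow> ereal) \<Rightarrow> bool" where
  "econvex F \<longleftrightarrow> (\<forall>x y t. 0 < t \<and> t < 1 \<longrightarrow>
      F ((1 - t) *\<^sub>R x + t *\<^sub>R y) \<le> ereal (1 - t) * F x + ereal t * F y)"

definition elsc :: "('a::topological_space \<Rightarrow> ereal) \<Rightarrow> bool" where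
  "elsc F \<longleftrightarrow> (\<forall>x X. X \<longlonglongrightarrow> x \<longrightarrow> F x \<le> liminf (\<lambda>k. F (X k)))"

definition subdiff :: "('a::real_inner \<Rightarrow> ereal) \<Rightarrow> 'a \<Rightarrow> 'a set" where
  "subdiff G x = {g. G x < \<infinity> \<and> (\<forall>y. G x + ereal (g \<bullet> (y - x)) \<le> G y)}"

definition acc_point :: "(nat \<Rightarrow> 'a::topological_space) \<Rightarrow> 'a \<Rightarrow> bool" where
  "acc_point z x \<longleftrightarrow> (\<exists>r. strict_mono r \<and> (z \<circ> r) \<longlonglongrightarrow> x)"

text \<open>Linearisation of A at y, with Jac y the Jacobian (M x N matrix) of A at y.\<close>
definition linA :: "(real^'n \<Rightarrow> real^'m) \<Rightarrow> (real^'n \<Rightarrow> real^'n^'m) \<Rightarrow> real^'n \<Rightarrow> real^'n \<Rightarrow> real^'m" where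
  "linA A Jac y x = A y + Jac y *v (x - y)"

definition Jfun :: "(real^'n \<Rightarrow> real^'m) \<Rightarrow> (real^'n \<Rightarrow> ereal) \<Rightarrow> real^'n \<Rightarrow> ereal" where
  "Jfun A F x = ereal ((1/2) * (norm (A x))\<^sup>2) + F x"

text \<open>Clarke subdifferential of J = 1/2 |A|^2 + F at x in dom F:
  nabla A(x) A(x) + subdiff F x, where nabla A(x) = (Jacobian)^T.\<close>
definition clarke_subdiff :: "(real^'n \<Rightarrow> real^'m) \<Rightarrow> (real^'n \<Rightarrow> real^'n^'m) \<Rightarrow> (real^'n \<Rightarrow> ereal) \<Rightarrow> real^'n \<Rightarrow> (real^'n) set" where
  "clarke_subdiff A Jac F x = {transpose (Jac x) *v A x + g | g. g \<in> subdiff F x}"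

end

theory Submission
  imports Defs
begin

text \<open>Because the Taylor error of the linearisation is quadratic and the relaxation \<open>w\<close> is small,
  each relaxed step decreases \<open>J\<close> by at least \<open>w \<epsilon>/2 \<parallel>xt k - z k\<parallel>\<^sup>2\<close>; hence \<open>J (z k)\<close> converges and the
  steps vanish. Along a convergent subsequence, lower semicontinuity of \<open>F\<close> carries the subgradient
  inequalities of the subproblems to the limit, so the limit minimises its own prox-linearised model,
  whose first-order condition is exactly Clarke criticality. Finally, a bounded sequence with vanishing
  steps cannot oscillate between two disjoint closed pieces of the critical set.\<close>

lemma tendsto_matrix_vector_mult:
  fixes M :: "'a \<Rightarrow> real^'n^'m"
  assumes "(M \<longlongrightarrow> M0) F" "(x \<longlongrightarrow> x0) F"
  shows "((\<lambda>k. M k *v x k) \<longlongrightarrow> M0 *v x0) F"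
  unfolding matrix_vector_mult_def
  by (intro vec_tendstoI) (simp only: vec_lambda_beta, intro tendsto_intros assms)

lemma elsc_le_limit:
  fixes F :: "'a::topological_space \<Rightarrow> ereal"
  assumes "elsc F"
    and "X \<longlonglongrightarrow> x" and "g \<longlonglongrightarrow> c" and "\<And>k. F (X k) \<le> ereal (g k)"
  shows "F x \<le> ereal c"
proof -
  have "F x \<le> liminf (\<lambda>k. F (X k))" using assms(1,2) unfolding elsc_def by blast
  also have "\<dots> \<le> liminf (\<lambda>k. ereal (g k))" by (intro Liminf_mono) (auto simp: assms(4))
  also have "\<dots> = ereal c" by (intro lim_imp_Liminf) (auto intro!: tendsto_intros assms(3))
  finally show ?thesis .
qed

lemma econvex_combination_finite:
  assumes "econvex F" "\<forall>x. F x \<noteq> -\<infinity>" "F x = ereal a" "F y = ereal b" "0 \<le> t" "t \<le> 1"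
  shows "\<exists>c. F ((1-t) *\<^sub>R x + t *\<^sub>R y) = ereal c \<and> c \<le> (1-t)*a + t*b"
proof -
  consider "t = 0" | "t = 1" | "0 < t \<and> t < 1" using assms by linarith
  then show ?thesis
  proof cases
    case 3
    then have le: "F ((1-t) *\<^sub>R x + t *\<^sub>R y) \<le> ereal ((1-t)*a + t*b)"
      using assms(1,3,4) unfolding econvex_def by (metis times_ereal.simps(1) plus_ereal.simps(1))
    moreover have "F ((1-t) *\<^sub>R x + t *\<^sub>R y) \<noteq> -\<infinity>" using assms(2) by auto
    ultimately obtain c where "F ((1-t) *\<^sub>R x + t *\<^sub>R y) = ereal c"
      by (cases "F ((1-t) *\<^sub>R x + t *\<^sub>R y)") auto
    with le show ?thesis by auto
  qed (use assms in auto)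
qed

lemma power2_norm_add_scaleR:
  fixes p u :: "'a::real_inner"
  shows "(norm (p + w *\<^sub>R u))\<^sup>2 = (norm p)\<^sup>2 + 2*w*(p \<bullet> u) + w^2 * (norm u)\<^sup>2"
  by (simp only: power2_norm_eq_inner inner_add_left inner_add_right inner_scaleR_left inner_scaleR_right)
     (simp add: inner_commute algebra_simps power2_eq_square)

lemma power2_norm_convex_combination:
  fixes p q :: "'a::real_inner"
  assumes "0 \<le> w" "w \<le> 1"
  shows "(norm ((1-w) *\<^sub>R p + w *\<^sub>R q))\<^sup>2 \<le> (1-w) * (norm p)\<^sup>2 + w * (norm q)\<^sup>2"
proof -
  have "(1-w) *\<^sub>R p + w *\<^sub>R q = p + w *\<^sub>R (q - p)" by (simp add: algebra_simps)
  then have "(norm ((1-w) *\<^sub>R p + w *\<^sub>R q))\<^sup>2 = (norm p)\<^sup>2 + 2*w*(p \<bullet> (q-p)) + w^2 * (norm (q-p))\<^sup>2"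
    by (simp add: power2_norm_add_scaleR)
  moreover have "(1-w) * (norm p)\<^sup>2 + w * (norm q)\<^sup>2 = (norm p)\<^sup>2 + 2*w*(p \<bullet> (q-p)) + w * (norm (q-p))\<^sup>2"
    by (simp add: power2_norm_eq_inner inner_diff inner_commute algebra_simps)
  moreover have "w^2 * (norm (q-p))\<^sup>2 \<le> w * (norm (q-p))\<^sup>2"
    using assms by (intro mult_right_mono) (auto simp: power2_eq_square mult_left_le)
  ultimately show ?thesis by linarith
qed

lemma half_power2_norm_le:
  fixes b c :: "'a::real_inner"
  shows "(norm b)\<^sup>2 / 2 \<le> (norm c)\<^sup>2 / 2 + norm (b - c) * norm b"
proof -
  have "(norm c)\<^sup>2 = (norm b)\<^sup>2 - 2 * (b \<bullet> (b - c)) + (norm (b - c))\<^sup>2"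
    by (simp add: power2_norm_eq_inner inner_diff inner_commute algebra_simps)
  moreover have "b \<bullet> (b - c) \<le> norm (b - c) * norm b"
    using Cauchy_Schwarz_ineq2[of b "b - c"] by (simp add: mult.commute)
  moreover have "0 \<le> (norm (b - c))\<^sup>2" by simp
  ultimately show ?thesis by linarith
qed

text \<open>Intended reading: \<open>fy, fx, fy'\<close> are values of a convex function, \<open>a = A y\<close>, \<open>b = A y'\<close>,
  \<open>M\<close> the Jacobian at \<open>y\<close>, \<open>Am\<close> a bound on \<open>\<parallel>A\<parallel>\<close>. The Taylor error, at most \<open>C Am w\<^sup>2 \<parallel>x - y\<parallel>\<^sup>2\<close>
  after multiplying by \<open>\<parallel>b\<parallel>\<close>, is paid for out of the proximal term.\<close>
lemma relaxed_step_bounds: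
  fixes y x y' :: "real^'n" and a b :: "real^'m" and M :: "real^'n^'m"
  assumes y': "y' = (1-w) *\<^sub>R y + w *\<^sub>R x" and w: "0 < w" "w \<le> 1"
    and conv: "fy' \<le> (1-w)*fy + w*fx"
    and desc: "(norm (a + M *v (x - y)))\<^sup>2/2 + fx + \<beta>/2*(norm(x-y))\<^sup>2 \<le> (norm a)\<^sup>2/2 + fy"
    and taylor: "norm (b - (a + M *v (y' - y))) \<le> C*(norm(y'-y))\<^sup>2"
    and b_le: "norm b \<le> Am" and C: "C > 0" and w_small: "2*C*Am*w \<le> \<beta> - \<epsilon>"
  shows "(norm b)\<^sup>2/2 + fy' \<le> (1-w)*((norm a)\<^sup>2/2 + fy) + w*((norm (a + M *v (x - y)))\<^sup>2/2 + fx)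
      + C*Am*w\<^sup>2*(norm(x-y))\<^sup>2"
    and "(norm b)\<^sup>2/2 + fy' \<le> (norm a)\<^sup>2/2 + fy - w*\<epsilon>/2*(norm(x-y))\<^sup>2"
proof -
  define q where "q = a + M *v (x - y)"
  define n where "n = norm (x - y)"
  have dy: "y' - y = w *\<^sub>R (x - y)" using y' by (simp add: algebra_simps)
  have ny: "norm (y' - y) = w * n" using dy w by (simp add: n_def)
  have lin: "a + M *v (y' - y) = (1-w) *\<^sub>R a + w *\<^sub>R q"
    unfolding dy matrix_vector_mult_scaleR q_def by (simp add: algebra_simps)
  have h1: "(norm b)\<^sup>2/2 \<le> (norm (a + M *v (y' - y)))\<^sup>2/2 + norm (b - (a + M *v (y' - y))) * norm b"
    by (rule half_power2_norm_le)
  have "norm (b - (a + M *v (y' - y))) * norm b \<le> (C*(w*n)\<^sup>2) * Am"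
    using taylor b_le ny C by (intro mult_mono) auto
  then have h2: "norm (b - (a + M *v (y' - y))) * norm b \<le> C*Am*w\<^sup>2*n\<^sup>2"
    by (simp add: algebra_simps power2_eq_square)
  have h3: "(norm (a + M *v (y' - y)))\<^sup>2/2 \<le> (1-w) * (norm a)\<^sup>2/2 + w * (norm q)\<^sup>2/2"
    using power2_norm_convex_combination[of w a q] w unfolding lin by auto
  have "(1-w)*((norm a)\<^sup>2/2 + fy) + w*((norm q)\<^sup>2/2 + fx)
      = ((1-w) * (norm a)\<^sup>2/2 + w * (norm q)\<^sup>2/2) + ((1-w)*fy + w*fx)"
    by (simp add: algebra_simps)
  then show first: "(norm b)\<^sup>2/2 + fy' \<le> (1-w)*((norm a)\<^sup>2/2 + fy)
      + w*((norm (a + M *v (x - y)))\<^sup>2/2 + fx) + C*Am*w\<^sup>2*(norm(x-y))\<^sup>2"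
    using h1 h2 h3 conv unfolding q_def[symmetric] n_def[symmetric] by linarith
  have "w*((norm q)\<^sup>2/2 + fx) \<le> w*((norm a)\<^sup>2/2 + fy - \<beta>/2*n\<^sup>2)"
    using desc w unfolding q_def[symmetric] n_def[symmetric] by (intro mult_left_mono) auto
  moreover have "(2*C*Am*w) * (w * n\<^sup>2) \<le> (\<beta> - \<epsilon>) * (w * n\<^sup>2)"
    using w_small w by (intro mult_right_mono) auto
  moreover have "(1-w)*((norm a)\<^sup>2/2 + fy) + w*((norm a)\<^sup>2/2 + fy - \<beta>/2*n\<^sup>2)
      = ((norm a)\<^sup>2/2 + fy) - (w*\<beta>*n\<^sup>2)/2"
    by (simp add: field_simps)
  moreover have "(2*C*Am*w) * (w * n\<^sup>2) = 2 * (C*Am*w\<^sup>2*n\<^sup>2)"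
    by (simp add: algebra_simps power2_eq_square)
  moreover have "(\<beta> - \<epsilon>) * (w * n\<^sup>2) = w*\<beta>*n\<^sup>2 - 2*(w*\<epsilon>/2*n\<^sup>2)"
    by (simp add: algebra_simps)
  ultimately show "(norm b)\<^sup>2/2 + fy' \<le> (norm a)\<^sup>2/2 + fy - w*\<epsilon>/2*(norm(x-y))\<^sup>2"
    using first unfolding q_def[symmetric] n_def[symmetric] by linarith
qed

text \<open>Along the segment from \<open>xh\<close> to \<open>y\<close> the quadratic terms of the minimised function are of
  second order, so only the linear term \<open>a \<bullet> M (y - xh)\<close> survives.\<close>
lemma prox_linearised_minimiser_first_order:
  fixes f :: "real^'n \<Rightarrow> real" and M :: "real^'n^'m" and a :: "real^'m"
  assumes conv: "\<And>y t. y \<in> D \<Longrightarrow> 0 < t \<Longrightarrow> t < 1 \<Longrightarrow>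
      (1-t) *\<^sub>R xh + t *\<^sub>R y \<in> D \<and> f ((1-t) *\<^sub>R xh + t *\<^sub>R y) \<le> (1-t)*f xh + t*f y"
    and min: "\<And>y. y \<in> D \<Longrightarrow>
      f xh + (norm a)\<^sup>2/2 \<le> f y + (norm (a + M *v (y-xh)))\<^sup>2/2 + \<beta>/2*(norm(y-xh))\<^sup>2"
    and y: "y \<in> D"
  shows "f xh \<le> f y + a \<bullet> (M *v (y - xh))"
proof -
  define h where "h = y - xh"
  define u where "u = M *v h"
  define K where "K = (norm u)\<^sup>2/2 + \<beta>/2*(norm h)\<^sup>2"
  have segment: "f xh \<le> f y + a \<bullet> u + t*K" if t: "0 < t" "t < 1" for t
  proof -
    define p where "p = (1-t) *\<^sub>R xh + t *\<^sub>R y"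
    have p: "p \<in> D" "f p \<le> (1-t)*f xh + t*f y" using conv[OF y t] p_def by auto
    have "p - xh = t *\<^sub>R h" by (simp add: p_def h_def algebra_simps)
    then have "f xh + (norm a)\<^sup>2/2 \<le> f p + (norm (a + t *\<^sub>R u))\<^sup>2/2 + \<beta>/2*(norm(t *\<^sub>R h))\<^sup>2"
      using min[OF p(1)] by (simp add: matrix_vector_mult_scaleR u_def)
    moreover have "(norm (a + t *\<^sub>R u))\<^sup>2/2 = (norm a)\<^sup>2/2 + t*(a \<bullet> u) + t^2 * ((norm u)\<^sup>2/2)"
      by (simp add: power2_norm_add_scaleR)
    moreover have "\<beta>/2*(norm(t *\<^sub>R h))\<^sup>2 = t^2 * (\<beta>/2*(norm h)\<^sup>2)"
      using t by (simp add: power_mult_distrib)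
    moreover have "t * (f y + a \<bullet> u + t*K)
        = t*f y + t*(a \<bullet> u) + t^2*((norm u)\<^sup>2/2) + t^2*(\<beta>/2*(norm h)\<^sup>2)"
      by (simp add: K_def algebra_simps power2_eq_square)
    ultimately have "t * f xh \<le> t * (f y + a \<bullet> u + t*K)"
      using p(2) by (simp add: algebra_simps)
    then show ?thesis using t by simp
  qed
  have "((\<lambda>t. f y + a \<bullet> u + t*K) \<longlongrightarrow> f y + a \<bullet> u + 0*K) (at_right 0)"
    by (intro tendsto_intros)
  moreover have "\<forall>\<^sub>F t in at_right 0. f xh \<le> f y + a \<bullet> u + t*K"
    unfolding eventually_at_right[OF zero_less_one] using segment by (intro exI[of _ 1]) auto
  ultimately have "f xh \<le> f y + a \<bullet> u + 0*K"
    by (rule tendsto_lowerbound) simp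
  then show ?thesis by (simp add: u_def h_def)
qed

section \<open>Sequences approaching a closed set\<close>

lemma infdist_tendsto_0_of_acc_points:
  fixes z :: "nat \<Rightarrow> 'a::heine_borel"
  assumes bounded: "bounded (range z)" and acc: "\<And>x. acc_point z x \<Longrightarrow> x \<in> V"
  shows "(\<lambda>k. infdist (z k) V) \<longlonglongrightarrow> 0"
proof (rule ccontr)
  assume "\<not> ?thesis"
  then obtain \<eta> where \<eta>: "\<eta> > 0" "\<forall>N. \<exists>k\<ge>N. \<eta> \<le> infdist (z k) V"
    unfolding LIMSEQ_iff by (auto simp: not_less infdist_nonneg)
  then have "infinite {k. \<eta> \<le> infdist (z k) V}" by (simp add: infinite_nat_iff_unbounded_le)
  then obtain s :: "nat \<Rightarrow> nat" where s: "strict_mono s" "\<And>j. \<eta> \<le> infdist (z (s j)) V"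
    using infinite_enumerate by blast
  have "bounded (range (z \<circ> s))" using bounded by (rule bounded_subset) auto
  then obtain l r where lr: "strict_mono r" "((z \<circ> s) \<circ> r) \<longlonglongrightarrow> l"
    using bounded_imp_convergent_subsequence by blast
  have "acc_point z l" unfolding acc_point_def
    using lr s(1) by (intro exI[of _ "s \<circ> r"]) (auto simp: strict_mono_o o_assoc)
  then have "l \<in> V" by (rule acc)
  have "(\<lambda>j. infdist (((z \<circ> s) \<circ> r) j) V) \<longlonglongrightarrow> infdist l V"
    by (rule tendsto_infdist[OF lr(2)])
  moreover have "infdist l V = 0" using \<open>l \<in> V\<close> by simp
  ultimately have "\<forall>\<^sub>F j in sequentially. infdist (((z \<circ> s) \<circ> r) j) V < \<eta>"
    using \<eta>(1) by (auto intro: order_tendstoD)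
  then show False using s(2) by (auto simp: not_le[symmetric])
qed

lemma infdist_tendsto_0_trapped:
  fixes z :: "nat \<Rightarrow> 'a::metric_space"
  assumes gap: "\<And>x. \<delta> \<le> infdist x P + infdist x Q"
    and near: "\<And>k. k \<ge> N \<Longrightarrow> min (infdist (z k) P) (infdist (z k) Q) < \<delta>/3"
    and steps: "\<And>k. k \<ge> N \<Longrightarrow> dist (z (Suc k)) (z k) < \<delta>/3"
    and start: "infdist (z N) P < \<delta>/3"
    and lim: "(\<lambda>k. min (infdist (z k) P) (infdist (z k) Q)) \<longlonglongrightarrow> 0"
  shows "(\<lambda>k. infdist (z k) P) \<longlonglongrightarrow> 0"
proof -
  have trapped: "infdist (z k) P < \<delta>/3" if "k \<ge> N" for k
    using that
  proof (induction k rule: dec_induct)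
    case (step k)
    have "infdist (z (Suc k)) P \<le> infdist (z k) P + dist (z (Suc k)) (z k)"
      by (rule infdist_triangle)
    then have "infdist (z (Suc k)) Q > \<delta>/3" using step steps[of k] gap[of "z (Suc k)"] by auto
    then show ?case using near[of "Suc k"] step by (auto simp: min_def split: if_splits)
  qed (rule start)
  have "\<forall>\<^sub>F k in sequentially. min (infdist (z k) P) (infdist (z k) Q) = infdist (z k) P"
    unfolding eventually_sequentially
  proof (intro exI allI impI)
    fix k assume "k \<ge> N"
    with trapped have "infdist (z k) P < \<delta>/3" by blast
    moreover have "\<delta> \<le> infdist (z k) P + infdist (z k) Q" by (rule gap)
    ultimately show "min (infdist (z k) P) (infdist (z k) Q) = infdist (z k) P"
      using infdist_nonneg[of "z k" P] by linarith
  qed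
  from tendsto_cong[OF this, THEN iffD1, OF lim] show ?thesis .
qed

text \<open>Once the steps are shorter than a third of the gap between \<open>U1\<close> and \<open>U2\<close>, the sequence
  can no longer change sides.\<close>
lemma infdist_tendsto_0_one_of_separated:
  fixes z :: "nat \<Rightarrow> 'a::heine_borel"
  assumes lim: "(\<lambda>k. infdist (z k) (U1 \<union> U2)) \<longlonglongrightarrow> 0"
    and steps: "(\<lambda>k. dist (z (Suc k)) (z k)) \<longlonglongrightarrow> 0"
    and closed: "closed U1" "closed U2" and disjoint: "U1 \<inter> U2 = {}"
    and bounded: "bounded (U1 \<union> U2)" and nonempty: "U1 \<noteq> {}" "U2 \<noteq> {}"
  shows "\<exists>U\<in>{U1,U2}. (\<lambda>k. infdist (z k) U) \<longlonglongrightarrow> 0"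
proof -
  have "compact U1"
    using bounded closed by (auto simp: compact_eq_bounded_closed intro: bounded_subset)
  then obtain \<delta> where \<delta>: "\<delta> > 0" "\<forall>x\<in>U1. \<forall>y\<in>U2. \<delta> \<le> dist x y"
    using separate_compact_closed[OF _ closed(2) disjoint] by blast
  have gap: "\<delta> \<le> infdist x U1 + infdist x U2" for x
  proof -
    obtain p where p: "p \<in> U1" "infdist x U1 = dist x p"
      using infdist_attains_inf[OF closed(1) nonempty(1)] by blast
    obtain q where q: "q \<in> U2" "infdist x U2 = dist x q"
      using infdist_attains_inf[OF closed(2) nonempty(2)] by blast
    have "\<delta> \<le> dist p q" using \<delta>(2) p q by auto
    also have "\<dots> \<le> dist x p + dist x q" by (rule dist_triangle3)
    finally show ?thesis using p q by simp
  qed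
  have min_eq: "infdist (z k) (U1 \<union> U2) = min (infdist (z k) U1) (infdist (z k) U2)" for k
    using infdist_Un_min[OF nonempty] .
  have "\<forall>\<^sub>F k in sequentially. infdist (z k) (U1 \<union> U2) < \<delta>/3 \<and> dist (z (Suc k)) (z k) < \<delta>/3"
    using lim steps \<delta>(1) by (intro eventually_conj order_tendstoD) auto
  then obtain N where N: "\<And>k. k \<ge> N \<Longrightarrow> min (infdist (z k) U1) (infdist (z k) U2) < \<delta>/3"
      "\<And>k. k \<ge> N \<Longrightarrow> dist (z (Suc k)) (z k) < \<delta>/3"
    unfolding eventually_sequentially min_eq by blast
  have lim': "(\<lambda>k. min (infdist (z k) U1) (infdist (z k) U2)) \<longlonglongrightarrow> 0"
    using lim by (simp add: min_eq)
  show ?thesis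
  proof (cases "infdist (z N) U1 < \<delta>/3")
    case True
    then show ?thesis using infdist_tendsto_0_trapped[OF gap N True lim'] by auto
  next
    case False
    then have "infdist (z N) U2 < \<delta>/3" using N(1)[of N] by (auto simp: min_def split: if_splits)
    then show ?thesis
      using infdist_tendsto_0_trapped[of \<delta> U2 U1 N z] gap N lim'
      by (auto simp: add.commute min.commute)
  qed
qed

lemma acc_point_mem_closed:
  assumes "closed U" "U \<noteq> {}" "(\<lambda>k. infdist (z k) U) \<longlonglongrightarrow> 0" "acc_point z x"
  shows "x \<in> U"
proof -
  obtain r where r: "strict_mono r" "(z \<circ> r) \<longlonglongrightarrow> x" using assms(4) by (auto simp: acc_point_def)
  have "(\<lambda>j. infdist ((z \<circ> r) j) U) \<longlonglongrightarrow> infdist x U" by (rule tendsto_infdist[OF r(2)])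
  moreover have "(\<lambda>j. infdist ((z \<circ> r) j) U) \<longlonglongrightarrow> 0"
    using LIMSEQ_subseq_LIMSEQ[OF assms(3) r(1)] by (simp add: o_def)
  ultimately have "infdist x U = 0" by (rule LIMSEQ_unique)
  then show ?thesis using in_closed_iff_infdist_zero[OF assms(1,2)] by simp
qed

lemma acc_points_in_one_of_separated:
  fixes z :: "nat \<Rightarrow> 'a::heine_borel"
  assumes "bounded (range z)" and acc: "\<And>x. acc_point z x \<Longrightarrow> x \<in> U1 \<union> U2"
    and "(\<lambda>k. dist (z (Suc k)) (z k)) \<longlonglongrightarrow> 0"
    and "closed U1" "closed U2" "U1 \<inter> U2 = {}" "bounded (U1 \<union> U2)"
  shows "\<exists>U\<in>{U1,U2}. (\<forall>x. acc_point z x \<longrightarrow> x \<in> U) \<and> (\<lambda>k. infdist (z k) U) \<longlonglongrightarrow> 0"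
proof -
  have lim: "(\<lambda>k. infdist (z k) (U1 \<union> U2)) \<longlonglongrightarrow> 0"
    using infdist_tendsto_0_of_acc_points assms(1) acc by blast
  show ?thesis
  proof (cases "U1 = {} \<or> U2 = {}")
    case True
    then show ?thesis using lim acc by auto
  next
    case False
    then obtain U where "U \<in> {U1, U2}" "(\<lambda>k. infdist (z k) U) \<longlonglongrightarrow> 0"
      using infdist_tendsto_0_one_of_separated[OF lim assms(3-7)] by blast
    then show ?thesis using acc_point_mem_closed assms(4,5) False by blast
  qed
qed

section \<open>The relaxed inexact proximal Gauss-Newton iteration\<close>

locale relaxed_prox_gauss_newton =
  fixes F :: "real^'n \<Rightarrow> ereal"
    and A :: "real^'n \<Rightarrow> real^'m"
    and Jac :: "real^'n \<Rightarrow> real^'n^'m"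
    and z0 :: "real^'n"
    and d C \<beta> \<epsilon> w :: real
    and z xt e :: "nat \<Rightarrow> real^'n"
  assumes F_convex: "econvex F" and F_proper: "proper_fun F" and F_lsc: "elsc F"
    and A_deriv: "\<And>y. y \<in> edom F \<Longrightarrow> (A has_derivative (\<lambda>h. Jac y *v h)) (at y within edom F)"
    and Jac_cont: "continuous_on (edom F) Jac"
    and z0_dom: "z0 \<in> edom F"
    and lev_bounded: "bounded {x. Jfun A F x \<le> Jfun A F z0}"
    and inf_F: "(INF x. F x) > -\<infinity>"
    and A_bdd: "bdd_above ((\<lambda>x. norm (A x)) ` edom F)"
    and d_pos: "d > 0" and C_pos: "C > 0"
    and taylor: "\<And>y x. Jfun A F y \<le> Jfun A F z0 \<Longrightarrow> x \<in> edom F \<Longrightarrow> dist x y \<le> d \<Longrightarrow>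
                   norm (A x - linA A Jac y x) \<le> C * (norm (x - y))\<^sup>2"
    and \<beta>_pos: "\<beta> > 0" and \<epsilon>_pos: "0 < \<epsilon>"
    and w_pos: "0 < w" and w_le1: "w \<le> 1"
    and w_le2: "Jfun A F z0 > (INF x. F x) \<Longrightarrow>
        w \<le> d / sqrt (2 / \<beta> * real_of_ereal (Jfun A F z0 - (INF x. F x)))"
    and w_le3: "2 * C * (SUP x\<in>edom F. norm (A x)) * w \<le> \<beta> - \<epsilon>"
    and z_0: "z 0 = z0"
    and z_Suc: "\<And>k. z (Suc k) = (1 - w) *\<^sub>R z k + w *\<^sub>R xt k"
    and e_sub: "\<And>k. e k \<in> subdiff (\<lambda>x. Jfun (linA A Jac (z k)) F x + ereal (\<beta> / 2 * (norm (x - z k))\<^sup>2)) (xt k)"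
    and e_lim: "e \<longlonglongrightarrow> 0"
    and descent: "\<And>k. (let Jt = (\<lambda>x. Jfun (linA A Jac (z k)) F x + ereal (\<beta> / 2 * (norm (x - z k))\<^sup>2))
                      in (Jt (z k) \<ge> Jt (xt k) \<and> xt k \<noteq> z k) \<or> (xt k = z k \<and> 0 \<in> subdiff Jt (z k)))"
begin

text \<open>Real-valued versions, meaningful on \<open>edom F\<close>, of \<open>F\<close>, of \<open>J\<close> and (\<open>model k\<close>) of the
  subproblem objective \<open>J\<^sub>k(x) + \<beta>/2 \<parallel>x - z k\<parallel>\<^sup>2\<close>.\<close>

definition Fr :: "real^'n \<Rightarrow> real" where
  "Fr x = real_of_ereal (F x)"

definition Jr :: "real^'n \<Rightarrow> real" where
  "Jr x = (norm (A x))\<^sup>2/2 + Fr x"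

definition model :: "nat \<Rightarrow> real^'n \<Rightarrow> real" where
  "model k x = (norm (linA A Jac (z k) x))\<^sup>2/2 + Fr x + \<beta>/2 * (norm (x - z k))\<^sup>2"

definition infF :: real where
  "infF = real_of_ereal (INF x. F x)"

definition Amax :: real where
  "Amax = (SUP x\<in>edom F. norm (A x))"

lemma F_eq_ereal: "x \<in> edom F \<Longrightarrow> F x = ereal (Fr x)"
  using F_proper by (cases "F x") (auto simp: edom_def Fr_def proper_fun_def)

lemma F_outside_dom: "x \<notin> edom F \<Longrightarrow> F x = \<infinity>"
  by (simp add: edom_def)

lemma Jfun_eq_ereal: "x \<in> edom F \<Longrightarrow> Jfun A F x = ereal (Jr x)"
  by (simp add: Jfun_def Jr_def F_eq_ereal)

lemma INF_F_eq: "(INF x. F x) = ereal infF"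
proof -
  have "(INF x. F x) \<le> F z0" by (rule INF_lower) simp
  then have "(INF x. F x) \<noteq> \<infinity>" using F_eq_ereal[OF z0_dom] by auto
  then show ?thesis using inf_F by (cases "INF x. F x") (auto simp: infF_def)
qed

lemma infF_le_Fr: "x \<in> edom F \<Longrightarrow> infF \<le> Fr x"
  using INF_lower[of x UNIV F] by (simp add: INF_F_eq F_eq_ereal)

lemma infF_le_Jr: "x \<in> edom F \<Longrightarrow> infF \<le> Jr x"
  using infF_le_Fr[of x] by (simp add: Jr_def add_increasing)

lemma norm_A_le_Amax: "x \<in> edom F \<Longrightarrow> norm (A x) \<le> Amax"
  unfolding Amax_def using A_bdd by (intro cSUP_upper)

lemma convex_combination_dom:
  assumes "x \<in> edom F" "y \<in> edom F" "0 \<le> t" "t \<le> 1"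
  shows "(1-t) *\<^sub>R x + t *\<^sub>R y \<in> edom F \<and> Fr ((1-t) *\<^sub>R x + t *\<^sub>R y) \<le> (1-t) * Fr x + t * Fr y"
proof -
  have "\<forall>x. F x \<noteq> -\<infinity>" using F_proper by (simp add: proper_fun_def)
  then obtain c where "F ((1-t) *\<^sub>R x + t *\<^sub>R y) = ereal c" "c \<le> (1-t) * Fr x + t * Fr y"
    using econvex_combination_finite[OF F_convex _ F_eq_ereal F_eq_ereal] assms by blast
  then show ?thesis by (simp add: edom_def Fr_def)
qed

lemma subproblem_eq_model:
  "x \<in> edom F \<Longrightarrow> Jfun (linA A Jac (z k)) F x + ereal (\<beta>/2 * (norm (x - z k))\<^sup>2) = ereal (model k x)"
  by (simp add: Jfun_def model_def F_eq_ereal)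

lemma model_at_iterate: "model k (z k) = Jr (z k)"
  by (simp add: model_def Jr_def linA_def)

lemma xt_in_dom: "xt k \<in> edom F"
  using e_sub[of k] F_outside_dom[of "xt k"] by (auto simp: subdiff_def Jfun_def)

lemma model_subgradient_ineq:
  assumes "y \<in> edom F"
  shows "model k (xt k) + e k \<bullet> (y - xt k) \<le> model k y"
proof -
  have "Jfun (linA A Jac (z k)) F (xt k) + ereal (\<beta>/2 * (norm (xt k - z k))\<^sup>2) + ereal (e k \<bullet> (y - xt k))
      \<le> Jfun (linA A Jac (z k)) F y + ereal (\<beta>/2 * (norm (y - z k))\<^sup>2)"
    using e_sub[of k] unfolding subdiff_def by blast
  then show ?thesis by (simp only: subproblem_eq_model[OF xt_in_dom] subproblem_eq_model[OF assms]) simp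
qed

lemma model_descent: "z k \<in> edom F \<Longrightarrow> model k (xt k) \<le> Jr (z k)"
  using descent[of k] subproblem_eq_model[OF xt_in_dom, of k] subproblem_eq_model[of "z k" k]
  by (auto simp: Let_def model_at_iterate)

lemma dist_step: "dist (z (Suc k)) (z k) = w * norm (xt k - z k)"
  using w_pos by (simp add: dist_norm z_Suc algebra_simps flip: scaleR_diff_right)

lemma model_step_bound:
  assumes "z k \<in> edom F" "Jr (z k) \<le> Jr z0"
  shows "\<beta>/2 * (norm (xt k - z k))\<^sup>2 \<le> Jr z0 - infF"
proof -
  have "(norm (linA A Jac (z k) (xt k)))\<^sup>2/2 + Fr (xt k) + \<beta>/2 * (norm (xt k - z k))\<^sup>2 \<le> Jr z0"
    using model_descent[OF assms(1)] assms(2) by (simp add: model_def)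
  moreover have "infF \<le> Fr (xt k)" by (rule infF_le_Fr[OF xt_in_dom])
  moreover have "0 \<le> (norm (linA A Jac (z k) (xt k)))\<^sup>2/2" by simp
  ultimately show ?thesis by linarith
qed

text \<open>This is where the middle bound on \<open>w\<close> is used, together with
  \<open>\<beta>/2 \<parallel>xt k - z k\<parallel>\<^sup>2 \<le> J z0 - inf F\<close>.\<close>
lemma step_le_radius:
  assumes "z k \<in> edom F" "Jr (z k) \<le> Jr z0"
  shows "dist (z (Suc k)) (z k) \<le> d"
proof -
  define n where "n = norm (xt k - z k)"
  have bound: "\<beta>/2 * n\<^sup>2 \<le> Jr z0 - infF" using model_step_bound[OF assms] by (simp add: n_def)
  show ?thesis
  proof (cases "infF < Jr z0")
    case True
    then have "Jfun A F z0 > (INF x. F x)" by (simp add: Jfun_eq_ereal[OF z0_dom] INF_F_eq)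
    then have w_le: "w \<le> d / sqrt (2 / \<beta> * (Jr z0 - infF))"
      using w_le2 by (simp add: Jfun_eq_ereal[OF z0_dom] INF_F_eq)
    have pos: "sqrt (2 / \<beta> * (Jr z0 - infF)) > 0" using True \<beta>_pos by simp
    have "n\<^sup>2 \<le> 2 / \<beta> * (Jr z0 - infF)" using bound \<beta>_pos by (simp add: field_simps)
    then have "n \<le> sqrt (2 / \<beta> * (Jr z0 - infF))" by (rule real_le_rsqrt)
    then have "w * n \<le> w * sqrt (2 / \<beta> * (Jr z0 - infF))" using w_pos by simp
    also have "\<dots> \<le> d" using w_le pos by (simp add: pos_le_divide_eq)
    finally show ?thesis by (simp add: dist_step n_def)
  next
    case False
    then have "\<beta>/2 * n\<^sup>2 \<le> 0" using bound by linarith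
    then have "n\<^sup>2 \<le> 0" using \<beta>_pos by (simp add: mult_le_0_iff)
    then have "n = 0" by simp
    then show ?thesis using d_pos by (simp add: dist_step n_def)
  qed
qed

lemma step_bounds:
  assumes zk: "z k \<in> edom F" "Jr (z k) \<le> Jr z0"
  shows "z (Suc k) \<in> edom F"
    and "Jr (z (Suc k)) \<le> (1-w) * Jr (z k) + w * ((norm (linA A Jac (z k) (xt k)))\<^sup>2/2 + Fr (xt k))
        + C * Amax * w\<^sup>2 * (norm (xt k - z k))\<^sup>2"
    and "Jr (z (Suc k)) \<le> Jr (z k) - w * \<epsilon>/2 * (norm (xt k - z k))\<^sup>2"
proof -
  have conv: "z (Suc k) \<in> edom F" "Fr (z (Suc k)) \<le> (1-w) * Fr (z k) + w * Fr (xt k)"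
    using convex_combination_dom[OF zk(1) xt_in_dom] w_pos w_le1 by (simp_all add: z_Suc)
  then show "z (Suc k) \<in> edom F" by simp
  have desc: "(norm (A (z k) + Jac (z k) *v (xt k - z k)))\<^sup>2/2 + Fr (xt k) + \<beta>/2 * (norm (xt k - z k))\<^sup>2
      \<le> (norm (A (z k)))\<^sup>2/2 + Fr (z k)"
    using model_descent[OF zk(1)] by (simp add: model_def linA_def Jr_def)
  have "Jfun A F (z k) \<le> Jfun A F z0" using zk by (simp add: Jfun_eq_ereal z0_dom)
  then have "norm (A (z (Suc k)) - (A (z k) + Jac (z k) *v (z (Suc k) - z k)))
      \<le> C * (norm (z (Suc k) - z k))\<^sup>2"
    using taylor[OF _ conv(1)] step_le_radius[OF zk] by (simp add: dist_commute linA_def)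
  note relaxed = relaxed_step_bounds[OF z_Suc w_pos w_le1 conv(2) desc this
      norm_A_le_Amax[OF conv(1)] C_pos w_le3[folded Amax_def]]
  show "Jr (z (Suc k)) \<le> (1-w) * Jr (z k) + w * ((norm (linA A Jac (z k) (xt k)))\<^sup>2/2 + Fr (xt k))
        + C * Amax * w\<^sup>2 * (norm (xt k - z k))\<^sup>2"
    using relaxed(1) by (simp add: Jr_def linA_def)
  show "Jr (z (Suc k)) \<le> Jr (z k) - w * \<epsilon>/2 * (norm (xt k - z k))\<^sup>2"
    using relaxed(2) by (simp add: Jr_def)
qed

lemma iterates_in_sublevel: "z k \<in> edom F \<and> Jr (z k) \<le> Jr z0"
proof (induction k)
  case (Suc k)
  have "0 \<le> w * \<epsilon>/2 * (norm (xt k - z k))\<^sup>2" using w_pos \<epsilon>_pos by simp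
  then show ?case using step_bounds[of k] Suc by fastforce
qed (simp add: z_0 z0_dom)

lemma z_in_dom: "z k \<in> edom F"
  using iterates_in_sublevel by blast

lemma Jr_z_le_Jr_z0: "Jr (z k) \<le> Jr z0"
  using iterates_in_sublevel by blast

lemmas sufficient_decrease = step_bounds(3)[OF z_in_dom Jr_z_le_Jr_z0]
lemmas relaxed_value_bound = step_bounds(2)[OF z_in_dom Jr_z_le_Jr_z0]

lemma decseq_Jr: "decseq (\<lambda>k. Jr (z k))"
proof (rule decseq_SucI)
  fix k
  have "0 \<le> w * \<epsilon>/2 * (norm (xt k - z k))\<^sup>2" using w_pos \<epsilon>_pos by simp
  then show "Jr (z (Suc k)) \<le> Jr (z k)" using sufficient_decrease[of k] by linarith
qed

definition L :: real where
  "L = lim (\<lambda>k. Jr (z k))"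

lemma Jr_tendsto_L: "(\<lambda>k. Jr (z k)) \<longlonglongrightarrow> L"
proof -
  obtain l where "(\<lambda>k. Jr (z k)) \<longlonglongrightarrow> l"
    using decseq_convergent[OF decseq_Jr, of infF] infF_le_Jr[OF z_in_dom] by blast
  then show ?thesis unfolding L_def by (rule convergentI[THEN convergent_LIMSEQ_iff[THEN iffD1]])
qed

lemma norm_xt_minus_z_tendsto_0: "(\<lambda>k. norm (xt k - z k)) \<longlonglongrightarrow> 0"
proof -
  have "(\<lambda>k. (norm (xt k - z k))\<^sup>2) \<longlonglongrightarrow> 0"
  proof (rule tendsto_sandwich[of "\<lambda>_. 0" _ _ "\<lambda>k. (Jr (z k) - Jr (z (Suc k))) * (2/(w*\<epsilon>))"])
    show "\<forall>\<^sub>F k in sequentially. (norm (xt k - z k))\<^sup>2 \<le> (Jr (z k) - Jr (z (Suc k))) * (2/(w*\<epsilon>))"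
    proof (intro always_eventually allI)
      fix k
      have "w*\<epsilon>/2 * (norm (xt k - z k))\<^sup>2 \<le> Jr (z k) - Jr (z (Suc k))"
        using sufficient_decrease[of k] by simp
      then show "(norm (xt k - z k))\<^sup>2 \<le> (Jr (z k) - Jr (z (Suc k))) * (2/(w*\<epsilon>))"
        using w_pos \<epsilon>_pos by (simp add: field_simps)
    qed
    have "(\<lambda>k. (Jr (z k) - Jr (z (Suc k))) * (2/(w*\<epsilon>))) \<longlonglongrightarrow> (L - L) * (2/(w*\<epsilon>))"
      by (intro tendsto_intros Jr_tendsto_L LIMSEQ_Suc)
    then show "(\<lambda>k. (Jr (z k) - Jr (z (Suc k))) * (2/(w*\<epsilon>))) \<longlonglongrightarrow> 0" by simp
  qed auto
  then show ?thesis
    using tendsto_real_sqrt by fastforce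
qed

lemma step_tendsto_0: "(\<lambda>k. dist (z (Suc k)) (z k)) \<longlonglongrightarrow> 0"
proof -
  have "(\<lambda>k. w * norm (xt k - z k)) \<longlonglongrightarrow> w * 0"
    by (intro tendsto_intros norm_xt_minus_z_tendsto_0)
  then show ?thesis by (simp add: dist_step)
qed

lemma bounded_iterates: "bounded (range z)"
  by (rule bounded_subset[OF lev_bounded]) (auto simp: Jfun_eq_ereal z_in_dom z0_dom Jr_z_le_Jr_z0)

context
  fixes r :: "nat \<Rightarrow> nat" and xh :: "real^'n"
  assumes r_mono: "strict_mono r" and z_r: "(\<lambda>j. z (r j)) \<longlonglongrightarrow> xh"
begin

lemma xt_subseq_tendsto: "(\<lambda>j. xt (r j)) \<longlonglongrightarrow> xh"
proof -
  have "(\<lambda>j. norm (xt (r j) - z (r j))) \<longlonglongrightarrow> 0"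
    using LIMSEQ_subseq_LIMSEQ[OF norm_xt_minus_z_tendsto_0 r_mono] by (simp add: o_def)
  then have "(\<lambda>j. z (r j) + (xt (r j) - z (r j))) \<longlonglongrightarrow> xh + 0"
    by (intro tendsto_intros z_r) (simp add: tendsto_norm_zero_iff)
  then show ?thesis by simp
qed

lemma limit_in_dom: "xh \<in> edom F"
proof -
  have "F (z (r j)) \<le> ereal (Jr z0)" for j
  proof -
    have "0 \<le> (norm (A (z (r j))))\<^sup>2/2" by simp
    then have "Fr (z (r j)) \<le> Jr z0" using Jr_z_le_Jr_z0[of "r j"] unfolding Jr_def by linarith
    then show ?thesis using F_eq_ereal[OF z_in_dom] by simp
  qed
  then have "F xh \<le> ereal (Jr z0)" by (rule elsc_le_limit[OF F_lsc z_r tendsto_const])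
  then show ?thesis by (auto simp: edom_def)
qed

lemma A_subseq_tendsto: "(\<lambda>j. A (z (r j))) \<longlonglongrightarrow> A xh"
proof -
  have "continuous (at xh within edom F) A"
    using A_deriv[OF limit_in_dom] by (rule has_derivative_continuous)
  then show ?thesis
    using z_r z_in_dom unfolding continuous_within_sequentially by (auto simp: o_def)
qed

lemma linA_subseq_tendsto:
  assumes "X \<longlonglongrightarrow> y"
  shows "(\<lambda>j. linA A Jac (z (r j)) (X j)) \<longlonglongrightarrow> A xh + Jac xh *v (y - xh)"
proof -
  have "(\<lambda>j. Jac (z (r j))) \<longlonglongrightarrow> Jac xh"
    using Jac_cont z_r z_in_dom limit_in_dom unfolding continuous_on_sequentially by (auto simp: o_def)
  then show ?thesis
    unfolding linA_def by (intro tendsto_intros A_subseq_tendsto tendsto_matrix_vector_mult assms z_r)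
qed

text \<open>The subgradient inequalities of the subproblems pass to the limit by lower semicontinuity
  of \<open>F\<close>.\<close>
lemma limit_minimises_model:
  assumes y: "y \<in> edom F"
  shows "Fr xh + (norm (A xh))\<^sup>2/2 \<le> Fr y + (norm (A xh + Jac xh *v (y - xh)))\<^sup>2/2 + \<beta>/2 * (norm (y - xh))\<^sup>2"
proof -
  define g where "g j = model (r j) y - (norm (linA A Jac (z (r j)) (xt (r j))))\<^sup>2/2
      - \<beta>/2 * (norm (xt (r j) - z (r j)))\<^sup>2 - e (r j) \<bullet> (y - xt (r j))" for j
  have "F (xt (r j)) \<le> ereal (g j)" for j
    using model_subgradient_ineq[OF y, of "r j"] F_eq_ereal[OF xt_in_dom]
    by (simp add: g_def model_def)
  moreover have "g \<longlonglongrightarrow> (norm (A xh + Jac xh *v (y - xh)))\<^sup>2/2 + Fr y + \<beta>/2 * (norm (y - xh))\<^sup>2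
      - (norm (A xh + Jac xh *v (xh - xh)))\<^sup>2/2 - \<beta>/2 * (norm (xh - xh))\<^sup>2 - 0 \<bullet> (y - xh)"
    unfolding g_def model_def
    using LIMSEQ_subseq_LIMSEQ[OF e_lim r_mono]
    by (intro tendsto_intros linA_subseq_tendsto z_r xt_subseq_tendsto) (simp_all add: o_def)
  ultimately have "F xh \<le> ereal ((norm (A xh + Jac xh *v (y - xh)))\<^sup>2/2 + Fr y + \<beta>/2 * (norm (y - xh))\<^sup>2
      - (norm (A xh))\<^sup>2/2)"
    using elsc_le_limit[OF F_lsc xt_subseq_tendsto] by simp
  then show ?thesis using F_eq_ereal[OF limit_in_dom] by simp
qed

lemma limit_clarke_critical: "0 \<in> clarke_subdiff A Jac F xh"
proof -
  have first_order: "Fr xh \<le> Fr y + A xh \<bullet> (Jac xh *v (y - xh))" if "y \<in> edom F" for y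
    using convex_combination_dom[OF limit_in_dom] limit_minimises_model that
    by (intro prox_linearised_minimiser_first_order[where D = "edom F" and \<beta> = \<beta>]) auto
  have "- (transpose (Jac xh) *v A xh) \<in> subdiff F xh"
    unfolding subdiff_def
  proof (intro CollectI conjI allI)
    show "F xh < \<infinity>" using limit_in_dom by (simp add: edom_def)
    fix y
    show "F xh + ereal (- (transpose (Jac xh) *v A xh) \<bullet> (y - xh)) \<le> F y"
    proof (cases "y \<in> edom F")
      case True
      then show ?thesis
        using first_order[OF True] by (simp add: F_eq_ereal limit_in_dom transpose_matrix_vector dot_lmul_matrix)
    qed (simp add: F_outside_dom)
  qed
  then show ?thesis unfolding clarke_subdiff_def by force
qed

lemma Jr_subseq_tendsto: "(\<lambda>j. Jr (z (r j))) \<longlonglongrightarrow> L"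
  using LIMSEQ_subseq_LIMSEQ[OF Jr_tendsto_L r_mono] by (simp add: o_def)

lemma limit_value_le: "Jr xh \<le> L"
proof -
  have "F xh \<le> ereal (L - (norm (A xh))\<^sup>2/2)"
  proof (rule elsc_le_limit[OF F_lsc z_r])
    show "(\<lambda>j. Jr (z (r j)) - (norm (A (z (r j))))\<^sup>2/2) \<longlonglongrightarrow> L - (norm (A xh))\<^sup>2/2"
      by (intro tendsto_intros Jr_subseq_tendsto A_subseq_tendsto) simp
    show "F (z (r j)) \<le> ereal (Jr (z (r j)) - (norm (A (z (r j))))\<^sup>2/2)" for j
      using F_eq_ereal[OF z_in_dom] by (simp add: Jr_def)
  qed
  then show ?thesis using F_eq_ereal[OF limit_in_dom] by (simp add: Jr_def)
qed

text \<open>The relaxed bound of one step together with the subgradient inequality at \<open>xh\<close>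
  gives \<open>L \<le> (1-w) L + w Jr xh\<close> in the limit.\<close>
lemma limit_value_ge: "L \<le> Jr xh"
proof -
  define h where "h j = (1-w) * Jr (z (r j)) + w * (model (r j) xh - \<beta>/2 * (norm (xt (r j) - z (r j)))\<^sup>2
      - e (r j) \<bullet> (xh - xt (r j))) + C * Amax * w\<^sup>2 * (norm (xt (r j) - z (r j)))\<^sup>2" for j
  have "Jr (z (Suc (r j))) \<le> h j" for j
  proof -
    have "w * ((norm (linA A Jac (z (r j)) (xt (r j))))\<^sup>2/2 + Fr (xt (r j))) \<le>
        w * (model (r j) xh - \<beta>/2 * (norm (xt (r j) - z (r j)))\<^sup>2 - e (r j) \<bullet> (xh - xt (r j)))"
      using model_subgradient_ineq[OF limit_in_dom, of "r j"] w_pos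
      by (intro mult_left_mono) (auto simp: model_def)
    then show ?thesis using relaxed_value_bound[of "r j"] unfolding h_def by linarith
  qed
  moreover have "(\<lambda>j. Jr (z (Suc (r j)))) \<longlonglongrightarrow> L"
    using LIMSEQ_subseq_LIMSEQ[OF LIMSEQ_Suc[OF Jr_tendsto_L] r_mono] by (simp add: o_def)
  moreover have "h \<longlonglongrightarrow> (1-w) * L + w * ((norm (A xh + Jac xh *v (xh - xh)))\<^sup>2/2 + Fr xh
      + \<beta>/2 * (norm (xh - xh))\<^sup>2 - \<beta>/2 * (norm (xh - xh))\<^sup>2 - 0 \<bullet> (xh - xh))
      + C * Amax * w\<^sup>2 * (norm (xh - xh))\<^sup>2"
    unfolding h_def model_def using LIMSEQ_subseq_LIMSEQ[OF e_lim r_mono]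
    by (intro tendsto_intros Jr_subseq_tendsto linA_subseq_tendsto z_r xt_subseq_tendsto) (simp_all add: o_def)
  ultimately have "L \<le> (1-w) * L + w * Jr xh"
    by (simp add: Jr_def LIMSEQ_le)
  then show ?thesis using w_pos by (simp add: algebra_simps)
qed

lemma limit_value: "Jr xh = L"
  using limit_value_le limit_value_ge by (rule antisym)

end

lemma acc_point_critical:
  assumes "acc_point z xh"
  shows "xh \<in> edom F" "0 \<in> clarke_subdiff A Jac F xh" "Jr xh = L"
  using assms limit_in_dom limit_clarke_critical limit_value
  by (auto simp: acc_point_def o_def)

lemma bounded_critical_level_set:
  "bounded {xh \<in> edom F. 0 \<in> clarke_subdiff A Jac F xh \<and> Jfun A F xh = ereal L}"
proof (rule bounded_subset[OF lev_bounded], safe)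
  fix xh assume "xh \<in> edom F" "Jfun A F xh = ereal L"
  moreover have "L \<le> Jr z0" using decseq_ge[OF decseq_Jr Jr_tendsto_L, of 0] by (simp add: z_0)
  ultimately show "Jfun A F xh \<le> Jfun A F z0" by (simp add: Jfun_eq_ereal z0_dom)
qed

end

theorem theorem2p1:
  fixes F :: "real^'n \<Rightarrow> ereal"
    and A :: "real^'n \<Rightarrow> real^'m"
    and Jac :: "real^'n \<Rightarrow> real^'n^'m"
    and z0 :: "real^'n"
    and d C \<beta> \<epsilon> w :: real
    and z xt e :: "nat \<Rightarrow> real^'n"
  assumes F_convex: "econvex F" and F_proper: "proper_fun F" and F_lsc: "elsc F"
    and A_deriv: "\<And>y. y \<in> edom F \<Longrightarrow> (A has_derivative (\<lambda>h. Jac y *v h)) (at y within edom F)"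
    and Jac_cont: "continuous_on (edom F) Jac"
    and z0_dom: "z0 \<in> edom F"
    and lev_bounded: "bounded {x. Jfun A F x \<le> Jfun A F z0}"
    and inf_F: "(INF x. F x) > -\<infinity>"
    and A_bdd: "bdd_above ((\<lambda>x. norm (A x)) ` edom F)"
    and d_pos: "d > 0" and C_pos: "C > 0"
    and taylor: "\<And>y x. Jfun A F y \<le> Jfun A F z0 \<Longrightarrow> x \<in> edom F \<Longrightarrow> dist x y \<le> d \<Longrightarrow>
                   norm (A x - linA A Jac y x) \<le> C * (norm (x - y))\<^sup>2"
    and \<beta>_pos: "\<beta> > 0" and \<epsilon>_pos: "0 < \<epsilon>" and \<epsilon>_less: "\<epsilon> < \<beta>"
    and w_pos: "0 < w" and w_le1: "w \<le> 1"
    and w_le2: "Jfun A F z0 > (INF x. F x) \<Longrightarrow>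
        w \<le> d / sqrt (2 / \<beta> * real_of_ereal (Jfun A F z0 - (INF x. F x)))"
    and w_le3: "2 * C * (SUP x\<in>edom F. norm (A x)) * w \<le> \<beta> - \<epsilon>"
    and z_0: "z 0 = z0"
    and z_Suc: "\<And>k. z (Suc k) = (1 - w) *\<^sub>R z k + w *\<^sub>R xt k"
    and e_sub: "\<And>k. e k \<in> subdiff (\<lambda>x. Jfun (linA A Jac (z k)) F x + ereal (\<beta> / 2 * (norm (x - z k))\<^sup>2)) (xt k)"
    and e_lim: "e \<longlonglongrightarrow> 0"
    and descent: "\<And>k. (let Jt = (\<lambda>x. Jfun (linA A Jac (z k)) F x + ereal (\<beta> / 2 * (norm (x - z k))\<^sup>2))
                      in (Jt (z k) \<ge> Jt (xt k) \<and> xt k \<noteq> z k) \<or> (xt k = z k \<and> 0 \<in> subdiff Jt (z k)))"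
  shows "decseq (\<lambda>k. Jfun A F (z k)) \<and>
    (\<exists>L::real. ((\<lambda>k. Jfun A F (z k)) \<longlonglongrightarrow> ereal L)
      \<and> (\<forall>xh. acc_point z xh \<longrightarrow> 0 \<in> clarke_subdiff A Jac F xh \<and> Jfun A F xh = ereal L)
      \<and> (\<forall>U1 U2. closed U1 \<and> closed U2 \<and> U1 \<inter> U2 = {} \<and>
           {xh \<in> edom F. 0 \<in> clarke_subdiff A Jac F xh \<and> Jfun A F xh = ereal L} = U1 \<union> U2 \<longrightarrow>
           (\<exists>U \<in> {U1, U2}. (\<forall>xh. acc_point z xh \<longrightarrow> xh \<in> U) \<and> ((\<lambda>k. infdist (z k) U) \<longlonglongrightarrow> 0))))"
proof -
  interpret relaxed_prox_gauss_newton F A Jac z0 d C \<beta> \<epsilon> w z xt e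
    by unfold_locales (fact assms)+
  have acc: "0 \<in> clarke_subdiff A Jac F xh \<and> Jfun A F xh = ereal L" if "acc_point z xh" for xh
    using acc_point_critical[OF that] by (simp add: Jfun_eq_ereal)
  have component: "\<exists>U \<in> {U1, U2}. (\<forall>xh. acc_point z xh \<longrightarrow> xh \<in> U) \<and> (\<lambda>k. infdist (z k) U) \<longlonglongrightarrow> 0"
    if "closed U1" "closed U2" "U1 \<inter> U2 = {}"
      and V: "{xh \<in> edom F. 0 \<in> clarke_subdiff A Jac F xh \<and> Jfun A F xh = ereal L} = U1 \<union> U2"
    for U1 U2
  proof (rule acc_points_in_one_of_separated[OF bounded_iterates _ step_tendsto_0 that(1-3)])
    show "xh \<in> U1 \<union> U2" if "acc_point z xh" for xh
      using acc[OF that] acc_point_critical(1)[OF that] by (simp flip: V)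
    show "bounded (U1 \<union> U2)" using bounded_critical_level_set by (simp add: V)
  qed
  have "decseq (\<lambda>k. Jfun A F (z k))"
    using decseq_Jr by (simp add: decseq_def Jfun_eq_ereal z_in_dom)
  moreover have "(\<lambda>k. Jfun A F (z k)) \<longlonglongrightarrow> ereal L"
    using Jr_tendsto_L by (simp add: Jfun_eq_ereal z_in_dom)
  ultimately show ?thesis using acc component by blast
qed
end
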